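(* Let $N=(S,E,F,I)$ be a pure 1-occurrence Petri net. With notation $s^\bullet=\{t\mid F(s,t)>0\}$, ${}^\bullet s=\{t\mid F(t,s)>0\}$, ${}^\bullet Y(s)=\sum_{t\in Y}F(s,t)$, $X^\bullet(s)=\sum_{t\in X}F(t,s)$, and ${}^n s=\{X\subseteq{}^\bullet s\mid X^\bullet(s)\ge n\}$ for $n\in\mathbb{Z}$, define for each finite $Y\subseteq E$: $S_Y=\{s\in S\mid Y\subseteq s^\bullet,\ {}^\bullet Y(s)-I(s)>0\}$ and ${}^Y s={}^{\,{}^\bullet Y(s)-I(s)}s$. Define the event structure $(E,\vdash_N)$ by: for finite $Y$, $X\vdash_N Y$ iff $X=\bigcup_{s\in S_Y}X_s$ for some choice of $X_s\in{}^Y s$ ($s\in S_Y$); and for infinite $Y$, $\emptyset\vdash_N Y$ (and no other enablings of infinite sets). Then the finite left-closed configurations of $(E,\vdash_N)$ are exactly the configurations of $N$.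
   Context: A Petri net $(S,E,F,I)$: places $S$, transitions $E$, $F:(S\times E\cup E\times S)\to\mathbb{N}$, $I:S\to\mathbb{N}$. A finite multiset $X$ of transitions is a configuration iff $I(s)-\sum_tF(s,t)X(t)+\sum_tX(t)F(t,s)\ge0$ for all $s$. A 1-occurrence net is one in which every configuration is a set; a net is pure if no place $s$ and transition $t$ have both $F(s,t)>0$ and $F(t,s)>0$. For an event structure $(E,\vdash)$ with $\vdash\subseteq\mathcal{P}(E)\times\mathcal{P}(E)$, a set $X\subseteq E$ is a left-closed configuration iff for every $Y\subseteq X$ there is $Z\subseteq X$ with $Z\vdash Y$. *)

theory Defs
  imports Main "HOL-Library.Multiset"
begin

text \<open>The flow function F on
 (S \<times> E) \<union> (E \<times> S) is split into Fpre s t = F(s,t) and Fpost t s = F(t,s);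
 I is the initial marking. Values outside S / E are irrelevant.\<close>

definition net_config ::
  "'s set \<Rightarrow> 'e set \<Rightarrow> ('s \<Rightarrow> 'e \<Rightarrow> nat) \<Rightarrow> ('e \<Rightarrow> 's \<Rightarrow> nat) \<Rightarrow> ('s \<Rightarrow> nat) \<Rightarrow> 'e multiset \<Rightarrow> bool"
where
  "net_config S E Fpre Fpost I X \<longleftrightarrow>
     set_mset X \<subseteq> E \<and>
     (\<forall>s\<in>S. int (I s) - (\<Sum>t\<in>set_mset X. int (Fpre s t * count X t))
                       + (\<Sum>t\<in>set_mset X. int (count X t * Fpost t s)) \<ge> 0)"

definition one_occurrence ::
  "'s set \<Rightarrow> 'e set \<Rightarrow> ('s \<Rightarrow> 'e \<Rightarrow> nat) \<Rightarrow> ('e \<Rightarrow> 's \<Rightarrow> nat) \<Rightarrow> ('s \<Rightarrow> nat) \<Rightarrow> bool"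
where
  "one_occurrence S E Fpre Fpost I \<longleftrightarrow>
     (\<forall>X. net_config S E Fpre Fpost I X \<longrightarrow> (\<forall>t. count X t \<le> 1))"

definition pure_net ::
  "'s set \<Rightarrow> 'e set \<Rightarrow> ('s \<Rightarrow> 'e \<Rightarrow> nat) \<Rightarrow> ('e \<Rightarrow> 's \<Rightarrow> nat) \<Rightarrow> bool"
where
  "pure_net S E Fpre Fpost \<longleftrightarrow> (\<forall>s\<in>S. \<forall>t\<in>E. \<not> (Fpre s t > 0 \<and> Fpost t s > 0))"

definition left_closed_config :: "'e set \<Rightarrow> ('e set \<Rightarrow> 'e set \<Rightarrow> bool) \<Rightarrow> 'e set \<Rightarrow> bool"
where
  "left_closed_config E enab X \<longleftrightarrow> X \<subseteq> E \<and> (\<forall>Y\<subseteq>X. \<exists>Z\<subseteq>X. enab Z Y)"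

definition post_place :: "'e set \<Rightarrow> ('s \<Rightarrow> 'e \<Rightarrow> nat) \<Rightarrow> 's \<Rightarrow> 'e set" where
  "post_place E Fpre s = {t\<in>E. Fpre s t > 0}"

definition pre_place :: "'e set \<Rightarrow> ('e \<Rightarrow> 's \<Rightarrow> nat) \<Rightarrow> 's \<Rightarrow> 'e set" where
  "pre_place E Fpost s = {t\<in>E. Fpost t s > 0}"

text \<open>(^n s) = {X \<subseteq> \<bullet>s. X\<bullet>(s) \<ge> n}. For infinite X the sum X\<bullet>(s) of positive
 naturals is infinite, hence \<ge> n.\<close>
definition pre_sets :: "'e set \<Rightarrow> ('e \<Rightarrow> 's \<Rightarrow> nat) \<Rightarrow> int \<Rightarrow> 's \<Rightarrow> 'e set set" where
  "pre_sets E Fpost n s =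
     {X. X \<subseteq> pre_place E Fpost s \<and> (infinite X \<or> int (\<Sum>t\<in>X. Fpost t s) \<ge> n)}"

definition deficit :: "('s \<Rightarrow> 'e \<Rightarrow> nat) \<Rightarrow> ('s \<Rightarrow> nat) \<Rightarrow> 'e set \<Rightarrow> 's \<Rightarrow> int" where
  "deficit Fpre I Y s = int (\<Sum>t\<in>Y. Fpre s t) - int (I s)"

definition S_of :: "'s set \<Rightarrow> 'e set \<Rightarrow> ('s \<Rightarrow> 'e \<Rightarrow> nat) \<Rightarrow> ('s \<Rightarrow> nat) \<Rightarrow> 'e set \<Rightarrow> 's set" where
  "S_of S E Fpre I Y = {s\<in>S. Y \<subseteq> post_place E Fpre s \<and> deficit Fpre I Y s > 0}"

definition net_enab ::
  "'s set \<Rightarrow> 'e set \<Rightarrow> ('s \<Rightarrow> 'e \<Rightarrow> nat) \<Rightarrow> ('e \<Rightarrow> 's \<Rightarrow> nat) \<Rightarrow> ('s \<Rightarrow> nat) \<Rightarrow> 'e set \<Rightarrow> 'e set \<Rightarrow> bool"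
where
  "net_enab S E Fpre Fpost I X Y \<longleftrightarrow> Y \<subseteq> E \<and>
     (if finite Y then
        (\<exists>Xs. (\<forall>s\<in>S_of S E Fpre I Y. Xs s \<in> pre_sets E Fpost (deficit Fpre I Y s) s)
              \<and> X = (\<Union>s\<in>S_of S E Fpre I Y. Xs s))
      else X = {})"

end

theory Submission
  imports Defs
begin

text \<open>For a finite set X of transitions, being a configuration means that the marking
  I(s) - \<bullet>X(s) + X\<bullet>(s) reached by firing X is nonnegative at every place s, and in a
  1-occurrence net every configuration is a set. If X is left-closed, apply left-closedness
  to the part Y of X that consumes from s: whenever \<bullet>Y(s) = \<bullet>X(s) exceeds I(s), the set
  enabling Y contains a subset of X whose production at s covers \<bullet>X(s) - I(s).
  Conversely, if X is a configuration, any Y \<subseteq> X is enabled by choosing X \<inter> \<bullet>s at each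
  place s of S_Y, since its production X\<bullet>(s) covers \<bullet>X(s) - I(s) \<ge> \<bullet>Y(s) - I(s).\<close>

definition marking_after ::
  "('s \<Rightarrow> 'e \<Rightarrow> nat) \<Rightarrow> ('e \<Rightarrow> 's \<Rightarrow> nat) \<Rightarrow> ('s \<Rightarrow> nat) \<Rightarrow> 'e set \<Rightarrow> 's \<Rightarrow> int"
where
  "marking_after Fpre Fpost I X s =
     int (I s) - int (\<Sum>t\<in>X. Fpre s t) + int (\<Sum>t\<in>X. Fpost t s)"

lemma marking_after_eq_production_minus_deficit:
  "marking_after Fpre Fpost I X s = int (\<Sum>t\<in>X. Fpost t s) - deficit Fpre I X s"
  by (simp add: marking_after_def deficit_def)

lemma net_config_mset_set_iff:
  assumes "finite X"
  shows "net_config S E Fpre Fpost I (mset_set X) \<longleftrightarrow>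
           X \<subseteq> E \<and> (\<forall>s\<in>S. marking_after Fpre Fpost I X s \<ge> 0)"
proof -
  have "(\<Sum>t\<in>X. int (Fpre s t * count (mset_set X) t)) = int (\<Sum>t\<in>X. Fpre s t)"
   and "(\<Sum>t\<in>X. int (count (mset_set X) t * Fpost t s)) = int (\<Sum>t\<in>X. Fpost t s)" for s
    using assms by (simp_all add: of_nat_sum)
  then show ?thesis
    using assms by (simp add: net_config_def marking_after_def)
qed

lemma mset_set_set_mset_eq_if_count_le_1:
  assumes "\<And>t. count M t \<le> 1"
  shows "mset_set (set_mset M) = M"
proof (rule multiset_eqI)
  fix t
  show "count (mset_set (set_mset M)) t = count M t"
    using assms[of t]
    by (cases "t \<in># M") (auto simp: not_in_iff simp flip: count_greater_zero_iff)
qed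

lemma one_occurrence_config_eq_mset_set:
  assumes "one_occurrence S E Fpre Fpost I" and "net_config S E Fpre Fpost I M"
  shows "M = mset_set (set_mset M)"
  using assms mset_set_set_mset_eq_if_count_le_1[of M] by (simp add: one_occurrence_def)

lemma sum_post_place_inter:
  assumes "finite X" and "X \<subseteq> E"
  shows "(\<Sum>t\<in>X \<inter> post_place E Fpre s. Fpre s t) = (\<Sum>t\<in>X. Fpre s t)"
  using assms by (intro sum.mono_neutral_left) (auto simp: post_place_def)

lemma sum_pre_place_inter:
  assumes "finite X" and "X \<subseteq> E"
  shows "(\<Sum>t\<in>X \<inter> pre_place E Fpost s. Fpost t s) = (\<Sum>t\<in>X. Fpost t s)"
  using assms by (intro sum.mono_neutral_left) (auto simp: pre_place_def)

lemma deficit_mono: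
  assumes "finite X" and "Y \<subseteq> X"
  shows "deficit Fpre I Y s \<le> deficit Fpre I X s"
  using assms unfolding deficit_def by (intro diff_right_mono of_nat_mono sum_mono2) simp_all

lemma net_enab_production_ge_deficit:
  assumes enab: "net_enab S E Fpre Fpost I Z Y"
    and "finite Y" and "finite Z" and s: "s \<in> S_of S E Fpre I Y"
  shows "deficit Fpre I Y s \<le> int (\<Sum>t\<in>Z. Fpost t s)"
proof -
  obtain Xs where Xs: "Xs s \<in> pre_sets E Fpost (deficit Fpre I Y s) s"
    and Z: "Z = (\<Union>s\<in>S_of S E Fpre I Y. Xs s)"
    using enab s \<open>finite Y\<close> by (auto simp: net_enab_def)
  have "Xs s \<subseteq> Z" using Z s by blast
  then have "finite (Xs s)" using \<open>finite Z\<close> by (rule finite_subset)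
  then have "deficit Fpre I Y s \<le> int (\<Sum>t\<in>Xs s. Fpost t s)"
    using Xs by (simp add: pre_sets_def)
  also have "\<dots> \<le> int (\<Sum>t\<in>Z. Fpost t s)"
    using \<open>Xs s \<subseteq> Z\<close> \<open>finite Z\<close> by (intro of_nat_mono sum_mono2) simp_all
  finally show ?thesis .
qed

lemma left_closed_config_marking_nonneg:
  assumes "finite X" and lc: "left_closed_config E (net_enab S E Fpre Fpost I) X"
    and "s \<in> S"
  shows "marking_after Fpre Fpost I X s \<ge> 0"
proof (cases "deficit Fpre I X s > 0")
  case False
  then show ?thesis
    using of_nat_0_le_iff[of "\<Sum>t\<in>X. Fpost t s"]
    unfolding marking_after_eq_production_minus_deficit by linarith
next
  case True
  define Y where "Y = X \<inter> post_place E Fpre s"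
  have "X \<subseteq> E" using lc by (simp add: left_closed_config_def)
  have "Y \<subseteq> X" and "finite Y" using \<open>finite X\<close> by (auto simp: Y_def)
  have deficit_Y: "deficit Fpre I Y s = deficit Fpre I X s"
    by (simp only: Y_def deficit_def sum_post_place_inter[OF \<open>finite X\<close> \<open>X \<subseteq> E\<close>])
  then have "s \<in> S_of S E Fpre I Y"
    using True \<open>s \<in> S\<close> by (simp add: S_of_def Y_def)
  obtain Z where "Z \<subseteq> X" and enab: "net_enab S E Fpre Fpost I Z Y"
    using lc \<open>Y \<subseteq> X\<close> by (auto simp: left_closed_config_def)
  have "finite Z" using \<open>Z \<subseteq> X\<close> \<open>finite X\<close> by (rule finite_subset)
  with enab \<open>finite Y\<close> \<open>s \<in> S_of S E Fpre I Y\<close>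
  have "deficit Fpre I Y s \<le> int (\<Sum>t\<in>Z. Fpost t s)"
    by (intro net_enab_production_ge_deficit)
  also have "\<dots> \<le> int (\<Sum>t\<in>X. Fpost t s)"
    using \<open>Z \<subseteq> X\<close> \<open>finite X\<close> by (intro of_nat_mono sum_mono2) simp_all
  finally show ?thesis
    using deficit_Y unfolding marking_after_eq_production_minus_deficit by linarith
qed

lemma net_enab_by_pre_places:
  assumes "finite X" and "X \<subseteq> E" and marking: "\<forall>s\<in>S. marking_after Fpre Fpost I X s \<ge> 0"
    and "Y \<subseteq> X"
  shows "net_enab S E Fpre Fpost I (\<Union>s\<in>S_of S E Fpre I Y. X \<inter> pre_place E Fpost s) Y"
proof -
  have "X \<inter> pre_place E Fpost s \<in> pre_sets E Fpost (deficit Fpre I Y s) s"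
    if "s \<in> S_of S E Fpre I Y" for s
  proof -
    have "s \<in> S" using that by (simp add: S_of_def)
    have "deficit Fpre I Y s \<le> deficit Fpre I X s"
      using \<open>finite X\<close> \<open>Y \<subseteq> X\<close> by (rule deficit_mono)
    also have "\<dots> \<le> int (\<Sum>t\<in>X \<inter> pre_place E Fpost s. Fpost t s)"
      using marking \<open>s \<in> S\<close>
      unfolding sum_pre_place_inter[OF \<open>finite X\<close> \<open>X \<subseteq> E\<close>]
        marking_after_eq_production_minus_deficit
      by fastforce
    finally show ?thesis by (simp add: pre_sets_def)
  qed
  moreover have "finite Y" and "Y \<subseteq> E"
    using \<open>finite X\<close> \<open>X \<subseteq> E\<close> \<open>Y \<subseteq> X\<close> finite_subset by blast+
  ultimately show ?thesis
    unfolding net_enab_def if_P[OF \<open>finite Y\<close>]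
    by (intro conjI exI[of _ "\<lambda>s. X \<inter> pre_place E Fpost s"]) blast+
qed

lemma left_closed_config_iff_net_config:
  assumes "finite X"
  shows "left_closed_config E (net_enab S E Fpre Fpost I) X \<longleftrightarrow>
           net_config S E Fpre Fpost I (mset_set X)"
proof
  assume lc: "left_closed_config E (net_enab S E Fpre Fpost I) X"
  then have "X \<subseteq> E" by (simp add: left_closed_config_def)
  then show "net_config S E Fpre Fpost I (mset_set X)"
    using left_closed_config_marking_nonneg[OF assms lc]
    by (simp add: net_config_mset_set_iff assms)
next
  assume "net_config S E Fpre Fpost I (mset_set X)"
  then have "X \<subseteq> E" and marking: "\<forall>s\<in>S. marking_after Fpre Fpost I X s \<ge> 0"
    by (simp_all add: net_config_mset_set_iff assms)
  show "left_closed_config E (net_enab S E Fpre Fpost I) X"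
    unfolding left_closed_config_def
  proof (intro conjI \<open>X \<subseteq> E\<close> allI impI)
    fix Y
    assume "Y \<subseteq> X"
    have "(\<Union>s\<in>S_of S E Fpre I Y. X \<inter> pre_place E Fpost s) \<subseteq> X"
      by blast
    with net_enab_by_pre_places[OF assms \<open>X \<subseteq> E\<close> marking \<open>Y \<subseteq> X\<close>]
    show "\<exists>Z\<subseteq>X. net_enab S E Fpre Fpost I Z Y"
      by blast
  qed
qed

theorem mainTheorem8:
  fixes S :: "'s set" and E :: "'e set"
    and Fpre :: "'s \<Rightarrow> 'e \<Rightarrow> nat" and Fpost :: "'e \<Rightarrow> 's \<Rightarrow> nat" and I :: "'s \<Rightarrow> nat"
  assumes "pure_net S E Fpre Fpost"
    and "one_occurrence S E Fpre Fpost I"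
  shows "{mset_set X | X. finite X \<and> left_closed_config E (net_enab S E Fpre Fpost I) X}
           = {M. net_config S E Fpre Fpost I M}"
proof (intro set_eqI iffI)
  fix M
  assume "M \<in> {mset_set X | X. finite X \<and> left_closed_config E (net_enab S E Fpre Fpost I) X}"
  then show "M \<in> {M. net_config S E Fpre Fpost I M}"
    using left_closed_config_iff_net_config by blast
next
  fix M
  assume "M \<in> {M. net_config S E Fpre Fpost I M}"
  then have "M = mset_set (set_mset M)"
    using one_occurrence_config_eq_mset_set[OF assms(2)] by simp
  moreover have "left_closed_config E (net_enab S E Fpre Fpost I) (set_mset M)"
    using \<open>M \<in> {M. net_config S E Fpre Fpost I M}\<close> calculation
    by (simp add: left_closed_config_iff_net_config)
  ultimately show "M \<in> {mset_set X | X. finite X \<and> left_closed_config E (net_enab S E Fpre Fpost I) X}"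
    by blast
qed

end
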